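(* Let $N\ge1$ and $L=\sum_{i=0}^N a_i(x)\partial_x^i$ with $a_i(x)=\sum_{j=0}^i a_{i,j}x^j$ complex polynomials, $a_0\equiv0$, $a_i\equiv0$ for $i>N$. Suppose there are $\lambda_n\in\mathbb{C}$ ($n\ge0$, $\lambda_0=0$, and $\lambda_n\notin\{0,\lambda_1,\ldots,\lambda_{n-1}\}$ for $n\ge1$) and monic polynomials $P_n(x)=\sum_{i=0}^n b_{n,i}x^i$ of degree $n$ with $\sum_{i=1}^Na_i\partial_x^iP_n=\lambda_nP_n$ for all $n\ge0$ (convention: $b_{m,m}=1$, $b_{m,l}=0$ for $l>m$). Let $(\gamma_n)_{n\ge1}$ be nonzero complex numbers and define $P_0^{(1)}=P_0$ and $P_n^{(1)}=P_n+\gamma_nP_{n-1}$ for $n\ge1$. Assume there is a differential operator $L^{(1)}=\sum_{i=0}^{\widetilde N}a^{(1)}_i(x)\partial_x^i$ with complex polynomial coefficients, $\deg a_i^{(1)}\le i$, of order $\widetilde N\ge N$, such that $L^{(1)}P_n^{(1)}=\lambda_nP_n^{(1)}$ for all $n\ge0$. Then for all integers $n,k$ with $n\ge k>\widetilde N$, $$\sum_{j=0}^{k-1}(-1)^j\left[\sum_{s=1}^N\binom{n-k+j}{s-1}s!\,a_{s,s}\right]b_{n-k+j,n-k}\sum_{r=1}^{k-j}\gamma_{n-k+j+1}\cdots\gamma_{n-k+j+r}\,E_{k,n,j+r-1}=0,$$ where, for $0\le t\le k-1$, $E_{k,n,t}$ is the determinant of the $(k-t-1)\times(k-t-1)$ matrix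 whose $(\rho,c)$ entry ($1\le\rho,c\le k-t-1$) is $b_{n-k+t+1+c,\;n-k+t+\rho}$, and $E_{k,n,k-1}=1$.
   Context: $\partial_x^i$ denotes the $i$-th derivative in $x$. With the convention $b_{m,m}=1$, $b_{m,l}=0$ for $l>m$, the matrix defining $E_{k,n,t}$ is upper Hessenberg with first row $b_{n-k+t+2,n-k+t+1},\ldots,b_{n,n-k+t+1}$, ones on the subdiagonal and zeros below it. *)

theory Defs
  imports "HOL-Computational_Algebra.Polynomial" "Jordan_Normal_Form.Determinant"
begin

definition diff_op :: "(nat \<Rightarrow> complex poly) \<Rightarrow> nat \<Rightarrow> nat \<Rightarrow> complex poly \<Rightarrow> complex poly" where
  "diff_op c lo M p = (\<Sum>i=lo..M. c i * (pderiv ^^ i) p)"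

text \<open>E k n t: determinant of the (k-t-1) x (k-t-1) matrix with (rho,c) entry
  b_{n-k+t+1+c, n-k+t+rho} (1-indexed), where b m l = coeff (P m) l; E k n (k-1) = 1.\<close>
definition E_det :: "(nat \<Rightarrow> complex poly) \<Rightarrow> nat \<Rightarrow> nat \<Rightarrow> nat \<Rightarrow> complex" where
  "E_det P k n t = (if t = k - 1 then 1 else
     det (mat (k - t - 1) (k - t - 1)
       (\<lambda>(i, j). coeff (P (n - k + t + 2 + j)) (n - k + t + 1 + i))))"

end

theory Submission
  imports Defs
begin

(* Let R m = L1 P m - lam m P m. Applying L1 to P1 (m + 1) = P (m + 1) + gamma (m + 1) P m gives
   R (m + 1) = gamma (m + 1) ((lam (m + 1) - lam m) P m - R m) and R 0 = 0, so every R m is an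
   explicit combination of P 0, ..., P (m - 1). On the other hand x^n is the combination of the
   P m whose coefficients are the signed Hessenberg minors of the unitriangular matrix (b m l).
   Both L and L1 have order at most Nt and do not raise degrees, so (L1 - L) x^n has no monomial of
   degree n - k < n - Nt. Reading off that coefficient in the expansion of (L1 - L) x^n through the
   R m, and using lam (p + 1) - lam p = sum_s (p choose (s - 1)) s! a_{s,s}, gives the identity. *)

section \<open>Hessenberg determinants\<close>

lemma det_hessenberg_first_column:
  fixes f :: "nat \<times> nat \<Rightarrow> 'a::comm_ring_1"
  assumes zero: "\<And>i j. Suc j < i \<Longrightarrow> f (i, j) = 0" and one: "f (1, 0) = 1"
  shows "det (mat (Suc (Suc s)) (Suc (Suc s)) f) =
    f (0, 0) * det (mat (Suc s) (Suc s) (\<lambda>(i, j). f (Suc i, Suc j)))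
    - det (mat (Suc s) (Suc s) (\<lambda>(i, j). f (if i = 0 then 0 else Suc i, Suc j)))"
proof -
  let ?A = "mat (Suc (Suc s)) (Suc (Suc s)) f"
  have "det ?A = (\<Sum>i<Suc (Suc s). ?A $$ (i, 0) * cofactor ?A i 0)"
    by (rule laplace_expansion_column) auto
  also have "\<dots> = f (0, 0) * cofactor ?A 0 0 + f (1, 0) * cofactor ?A 1 0
      + (\<Sum>i<s. f (Suc (Suc i), 0) * cofactor ?A (Suc (Suc i)) 0)"
    by (simp only: sum.lessThan_Suc_shift) (simp add: add.assoc)
  also have "(\<Sum>i<s. f (Suc (Suc i), 0) * cofactor ?A (Suc (Suc i)) 0) = 0"
    using zero by (intro sum.neutral) auto
  also have "mat_delete ?A 0 0 = mat (Suc s) (Suc s) (\<lambda>(i, j). f (Suc i, Suc j))"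
    by (rule eq_matI) (auto simp: mat_delete_def)
  moreover have "mat_delete ?A 1 0
      = mat (Suc s) (Suc s) (\<lambda>(i, j). f (if i = 0 then 0 else Suc i, Suc j))"
    by (rule eq_matI) (auto simp: mat_delete_def)
  ultimately show ?thesis
    using one by (simp add: cofactor_def)
qed

lemma det_hessenberg_first_row:
  fixes f :: "nat \<times> nat \<Rightarrow> 'a::comm_ring_1"
  assumes "\<And>i j. Suc j < i \<Longrightarrow> f (i, j) = 0" and "\<And>j. f (Suc j, j) = 1"
  shows "det (mat (Suc s) (Suc s) f) = (\<Sum>c\<le>s. (-1)^c * f (0, c)
           * det (mat (s - c) (s - c) (\<lambda>(i, j). f (i + c + 1, j + c + 1))))"
  using assms
proof (induction s arbitrary: f)
  case 0
  then show ?case by (simp add: det_single)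
next
  case (Suc s)
  define g where "g = (\<lambda>(i, j). f (if i = 0 then 0 else Suc i, Suc j))"
  have "det (mat (Suc s) (Suc s) g) = (\<Sum>c\<le>s. (-1)^c * g (0, c)
           * det (mat (s - c) (s - c) (\<lambda>(i, j). g (i + c + 1, j + c + 1))))"
    by (rule Suc.IH) (use Suc.prems in \<open>auto simp: g_def\<close>)
  also have "\<dots> = (\<Sum>c\<le>s. (-1)^c * f (0, Suc c)
           * det (mat (s - c) (s - c) (\<lambda>(i, j). f (i + Suc c + 1, j + Suc c + 1))))"
    by (simp add: g_def)
  finally have minor: "det (mat (Suc s) (Suc s) g) = \<dots>" .
  show ?case
    unfolding sum.atMost_Suc_shift
    using det_hessenberg_first_column[of f s] Suc.prems
    by (simp add: minor[unfolded g_def] sum_negf algebra_simps)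
qed

section \<open>Expanding monomials in a monic triangular basis\<close>

definition hess_minor :: "(nat \<Rightarrow> 'a::comm_ring_1 poly) \<Rightarrow> nat \<Rightarrow> nat \<Rightarrow> 'a" where
  "hess_minor P n q = det (mat (n - q) (n - q) (\<lambda>(i, j). coeff (P (q + 1 + j)) (q + i)))"

lemma hess_minor_self [simp]: "hess_minor P n n = 1"
  by (simp add: hess_minor_def)

lemma hess_minor_rec:
  assumes deg: "\<And>m. degree (P m) = m" and monic: "\<And>m. coeff (P m) m = 1" and "q < n"
  shows "(-1)^(n - q) * hess_minor P n q
    = - (\<Sum>m\<in>{q<..n}. coeff (P m) q * ((-1)^(n - m) * hess_minor P n m))"
proof -
  obtain s where s: "n - q = Suc s"
    using \<open>q < n\<close> by (metis Suc_diff_Suc)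
  have expand: "hess_minor P n q
      = (\<Sum>c\<le>s. (-1)^c * coeff (P (q + 1 + c)) q * hess_minor P n (q + 1 + c))"
    unfolding hess_minor_def s
  proof (subst det_hessenberg_first_row, goal_cases)
    case 3
    have "n - (q + 1 + c) = s - c" for c using s by simp
    then show ?case
      by (intro sum.cong refl arg_cong[where f = det] eq_matI) (auto simp: ac_simps)
  qed (use monic in \<open>auto simp: deg coeff_eq_0 ac_simps\<close>)
  have "(-1)^(n - q) * hess_minor P n q
      = - (\<Sum>c\<le>s. coeff (P (q + 1 + c)) q * ((-1)^(n - (q + 1 + c)) * hess_minor P n (q + 1 + c)))"
    unfolding expand sum_distrib_left sum_negf[symmetric]
  proof (rule sum.cong[OF refl])
    fix c assume "c \<in> {..s}"
    then obtain e where "s = c + e" using le_Suc_ex by auto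
    then have "n - q = Suc (c + e)" "n - (q + 1 + c) = e" using s by auto
    then show "(-1)^(n - q) * ((-1)^c * coeff (P (q + 1 + c)) q * hess_minor P n (q + 1 + c))
      = - (coeff (P (q + 1 + c)) q * ((-1)^(n - (q + 1 + c)) * hess_minor P n (q + 1 + c)))"
      by (simp add: power_add algebra_simps)
  qed
  also have "(\<Sum>c\<le>s. coeff (P (q + 1 + c)) q * ((-1)^(n - (q + 1 + c)) * hess_minor P n (q + 1 + c)))
      = (\<Sum>m\<in>{q<..n}. coeff (P m) q * ((-1)^(n - m) * hess_minor P n m))"
    using s by (intro sum.reindex_bij_witness[where i = "\<lambda>m. m - q - 1" and j = "\<lambda>c. q + 1 + c"]) auto
  finally show ?thesis .
qed

lemma monom_eq_sum_hess_minor: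
  assumes deg: "\<And>m. degree (P m) = m" and monic: "\<And>m. coeff (P m) m = 1"
  shows "monom 1 n = (\<Sum>m\<le>n. smult ((-1)^(n - m) * hess_minor P n m) (P m))"
proof (rule poly_eqI)
  fix q
  define S where "S m = (-1)^(n - m) * hess_minor P n m" for m
  have "coeff (\<Sum>m\<le>n. smult (S m) (P m)) q = (\<Sum>m\<in>{q..n}. coeff (P m) q * S m)"
    by (auto simp: coeff_sum deg coeff_eq_0 mult.commute intro!: sum.mono_neutral_right)
  also have "\<dots> = (if n = q then 1 else 0)"
  proof (cases q n rule: linorder_cases)
    case less
    then have "{q..n} = insert q {q<..n}" by auto
    with less show ?thesis
      using hess_minor_rec[OF deg monic less] by (simp add: S_def monic)
  qed (auto simp: S_def monic)
  finally show "coeff (monom 1 n) q = coeff (\<Sum>m\<le>n. smult (S m) (P m)) q"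
    by (simp add: coeff_monom)
qed

section \<open>Differential operators with polynomial coefficients\<close>

lemma smult_sum_right: "smult a (\<Sum>x\<in>A. f x) = (\<Sum>x\<in>A. smult a (f x))"
  by (induction A rule: infinite_finite_induct) (simp_all add: smult_add_right)

lemma diff_op_add: "diff_op c lo M (p + q) = diff_op c lo M p + diff_op c lo M q"
  by (simp add: diff_op_def higher_pderiv_add distrib_left sum.distrib)

lemma diff_op_smult: "diff_op c lo M (smult a p) = smult a (diff_op c lo M p)"
  by (simp add: diff_op_def higher_pderiv_smult smult_sum_right)

lemma diff_op_0 [simp]: "diff_op c lo M 0 = 0"
  by (simp add: diff_op_def)

lemma diff_op_sum: "diff_op c lo M (\<Sum>x\<in>A. f x) = (\<Sum>x\<in>A. diff_op c lo M (f x))"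
  by (induction A rule: infinite_finite_induct) (simp_all add: diff_op_add)

lemma coeff_diff_op_monom_low:
  assumes "w + M < n"
  shows "coeff (diff_op c lo M (monom 1 n)) w = 0"
proof -
  have "coeff (c i * (pderiv ^^ i) (monom 1 n)) w = 0" if "i \<le> M" for i
    using assms that
    by (auto simp: coeff_mult coeff_higher_pderiv coeff_monom intro!: sum.neutral)
  then show ?thesis by (simp add: diff_op_def coeff_sum)
qed

lemma pochhammer_Suc_diff_eq_choose_fact:
  assumes "s \<le> m"
  shows "pochhammer (of_nat (Suc (m - s))) s = (of_nat (m choose s) * fact s :: 'a::field_char_0)"
proof -
  have "(of_nat (m choose s) :: 'a) = pochhammer (of_nat m - of_nat s + 1) s / fact s"
    by (simp add: binomial_gbinomial gbinomial_pochhammer')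
  also have "(of_nat m - of_nat s + 1 :: 'a) = of_nat (Suc (m - s))"
    using assms by (simp add: of_nat_diff)
  finally show ?thesis by simp
qed

lemma coeff_mult_higher_pderiv_top:
  fixes A p :: "'a::field_char_0 poly"
  assumes "degree A \<le> s" and "degree p \<le> m"
  shows "coeff (A * (pderiv ^^ s) p) m = of_nat (m choose s) * fact s * coeff A s * coeff p m"
proof -
  have vanish: "coeff A l = 0 \<or> coeff p (m + s - l) = 0" if "l \<noteq> s" for l
    using assms that by (cases "l < s") (auto simp: coeff_eq_0)
  have "coeff (A * (pderiv ^^ s) p) m
      = (\<Sum>l\<le>m. coeff A l * (pochhammer (of_nat (Suc (m - l))) s * coeff p (m - l + s)))"
    by (simp add: coeff_mult coeff_higher_pderiv)
  also have "\<dots> = (\<Sum>l\<in>{s} \<inter> {..m}. coeff A l * (pochhammer (of_nat (Suc (m - l))) s * coeff p (m - l + s)))"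
    by (intro sum.mono_neutral_right) (auto dest: vanish)
  also have "\<dots> = of_nat (m choose s) * fact s * coeff A s * coeff p m"
    by (cases "s \<le> m") (auto simp: pochhammer_Suc_diff_eq_choose_fact simp del: of_nat_Suc)
  finally show ?thesis .
qed

lemma eigenvalue_eq_sum_leading_coeffs:
  assumes "\<And>i. degree (c i) \<le> i" and "degree p = m" and "coeff p m = 1"
    and "diff_op c lo M p = smult l p"
  shows "l = (\<Sum>s=lo..M. of_nat (m choose s) * fact s * coeff (c s) s)"
proof -
  have "l = coeff (diff_op c lo M p) m"
    using assms by simp
  also have "\<dots> = (\<Sum>s=lo..M. coeff (c s * (pderiv ^^ s) p) m)"
    by (simp add: diff_op_def coeff_sum)
  also have "\<dots> = (\<Sum>s=lo..M. of_nat (m choose s) * fact s * coeff (c s) s)"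
    using assms by (simp add: coeff_mult_higher_pderiv_top)
  finally show ?thesis .
qed

lemma eigenvalue_Suc_diff:
  assumes "\<And>i. degree (c i) \<le> i" and "\<And>m. degree (P m) = m" and "\<And>m. coeff (P m) m = 1"
    and "\<And>m. diff_op c 1 M (P m) = smult (lam m) (P m)"
  shows "lam (Suc p) - lam p = (\<Sum>s=1..M. of_nat (p choose (s - 1)) * fact s * coeff (c s) s)"
proof -
  have "lam q = (\<Sum>s=1..M. of_nat (q choose s) * fact s * coeff (c s) s)" for q
    using assms by (intro eigenvalue_eq_sum_leading_coeffs) auto
  then have "lam (Suc p) - lam p
      = (\<Sum>s=1..M. (of_nat (Suc p choose s) - of_nat (p choose s)) * fact s * coeff (c s) s)"
    by (simp add: sum_subtractf[symmetric] left_diff_distrib)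
  also have "\<dots> = (\<Sum>s=1..M. of_nat (p choose (s - 1)) * fact s * coeff (c s) s)"
    by (intro sum.cong refl) (auto simp: Suc_le_eq gr0_conv_Suc)
  finally show ?thesis .
qed

section \<open>Residuals and the coefficient of degree n - k\<close>

lemma diff_op_residual_eq_sum:
  assumes base: "diff_op c lo M (P 0) = smult (lam 0) (P 0)"
    and step: "\<And>m. diff_op c lo M (P (Suc m) + smult (\<gamma> (Suc m)) (P m))
      = smult (lam (Suc m)) (P (Suc m) + smult (\<gamma> (Suc m)) (P m))"
  shows "diff_op c lo M (P m) - smult (lam m) (P m)
    = (\<Sum>p<m. smult ((-1)^(m - 1 - p) * (\<Prod>i=1..m - p. \<gamma> (p + i)) * (lam (Suc p) - lam p)) (P p))"
proof (induction m)
  case 0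
  then show ?case using base by simp
next
  case (Suc m)
  let ?T = "diff_op c lo M" and ?g = "\<gamma> (Suc m)"
  have "?T (P (Suc m)) = smult (lam (Suc m)) (P (Suc m)) + smult (lam (Suc m) * ?g) (P m)
      - smult ?g (?T (P m))"
    using step[of m] by (simp add: diff_op_add diff_op_smult smult_add_right eq_diff_eq)
  then have "?T (P (Suc m)) - smult (lam (Suc m)) (P (Suc m))
      = smult (?g * (lam (Suc m) - lam m)) (P m) - smult ?g (?T (P m) - smult (lam m) (P m))"
    by (simp add: smult_diff_right smult_diff_left algebra_simps)
  also have "smult ?g (?T (P m) - smult (lam m) (P m)) = - (\<Sum>p<m. smult ((-1)^(Suc m - 1 - p)
      * (\<Prod>i=1..Suc m - p. \<gamma> (p + i)) * (lam (Suc p) - lam p)) (P p))"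
    unfolding Suc.IH smult_sum_right sum_negf[symmetric]
  proof (rule sum.cong[OF refl])
    fix p assume "p \<in> {..<m}"
    then obtain d where "m = p + Suc d" using less_imp_Suc_add by auto
    then have "?g * ((-1)^(m - 1 - p) * (\<Prod>i=1..m - p. \<gamma> (p + i)) * (lam (Suc p) - lam p))
      = - ((-1)^(Suc m - 1 - p) * (\<Prod>i=1..Suc m - p. \<gamma> (p + i)) * (lam (Suc p) - lam p))"
      by (simp add: algebra_simps)
    then show "smult ?g (smult ((-1)^(m - 1 - p) * (\<Prod>i=1..m - p. \<gamma> (p + i)) * (lam (Suc p) - lam p)) (P p))
      = - smult ((-1)^(Suc m - 1 - p) * (\<Prod>i=1..Suc m - p. \<gamma> (p + i)) * (lam (Suc p) - lam p)) (P p)"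
      by (metis smult_smult smult_minus_left)
  qed
  finally show ?case by simp
qed

lemma sum_hess_minor_coeff_residual:
  assumes deg: "\<And>m. degree (P m) = m" and monic: "\<And>m. coeff (P m) m = 1"
    and eig: "\<And>m. diff_op c' lo' M' (P m) = smult (lam m) (P m)"
    and "w + M < n" and "w + M' < n"
  shows "(\<Sum>m\<le>n. (-1)^(n - m) * hess_minor P n m
    * coeff (diff_op c lo M (P m) - smult (lam m) (P m)) w) = 0"
proof -
  have expansion: "diff_op c lo M (monom 1 n) - diff_op c' lo' M' (monom 1 n)
      = (\<Sum>m\<le>n. smult ((-1)^(n - m) * hess_minor P n m) (diff_op c lo M (P m) - smult (lam m) (P m)))"
    by (subst (1 2) monom_eq_sum_hess_minor[OF deg monic])
      (simp add: diff_op_sum diff_op_smult eig smult_diff_right sum_subtractf)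
  have "coeff (diff_op c lo M (monom 1 n) - diff_op c' lo' M' (monom 1 n)) w = 0"
    using assms by (simp add: coeff_diff_op_monom_low)
  then show ?thesis by (simp add: expansion coeff_sum)
qed

lemma sum_triangle_reindex:
  fixes D h :: "nat \<Rightarrow> 'a::comm_ring_1" and G :: "nat \<Rightarrow> nat \<Rightarrow> 'a"
  assumes "k \<le> n" and "\<And>p. p < n - k \<Longrightarrow> h p = 0"
  shows "(\<Sum>m\<le>n. (-1)^(n - m) * D m * (\<Sum>p<m. (-1)^(m - 1 - p) * G p m * h p))
    = (-1)^(k - 1) * (\<Sum>j<k. (-1)^j * h (n - k + j)
        * (\<Sum>r=1..k - j. G (n - k + j) (n - k + j + r) * D (n - k + j + r)))"
proof -
  define w where "w = n - k"
  have n: "n = w + k" using \<open>k \<le> n\<close> by (simp add: w_def)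
  define F where "F p m = (-1)^(n - m) * (-1)^(m - 1 - p) * G p m * D m" for p m
  have "(\<Sum>m\<le>n. (-1)^(n - m) * D m * (\<Sum>p<m. (-1)^(m - 1 - p) * G p m * h p))
      = (\<Sum>p<n. h p * (\<Sum>m=Suc p..n. F p m))"
    by (simp add: F_def sum_distrib_left sum.nested_swap' mult_ac)
  also have "\<dots> = (\<Sum>p\<in>{w..<n}. h p * (\<Sum>m=Suc p..n. F p m))"
    using assms by (intro sum.mono_neutral_right) (auto simp: w_def)
  also have "\<dots> = (\<Sum>j<k. h (w + j) * (\<Sum>m=Suc (w + j)..n. F (w + j) m))"
    using n by (intro sum.reindex_bij_witness[where i = "\<lambda>j. w + j" and j = "\<lambda>p. p - w"]) auto
  also have "\<dots> = (\<Sum>j<k. h (w + j) * (\<Sum>r=1..k - j. F (w + j) (w + j + r)))"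
  proof (rule sum.cong[OF refl])
    fix j assume "j \<in> {..<k}"
    then have "(\<Sum>m=Suc (w + j)..n. F (w + j) m) = (\<Sum>r=1..k - j. F (w + j) (w + j + r))"
      using n by (intro sum.reindex_bij_witness[where i = "\<lambda>r. w + j + r" and j = "\<lambda>m. m - (w + j)"]) auto
    then show "h (w + j) * (\<Sum>m=Suc (w + j)..n. F (w + j) m)
      = h (w + j) * (\<Sum>r=1..k - j. F (w + j) (w + j + r))" by simp
  qed
  also have "\<dots> = (-1)^(k - 1) * (\<Sum>j<k. (-1)^j * h (w + j)
      * (\<Sum>r=1..k - j. G (w + j) (w + j + r) * D (w + j + r)))"
    unfolding sum_distrib_left
  proof (intro sum.cong refl)
    fix j r assume "j \<in> {..<k}" and "r \<in> {1..k - j}"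
    define r' e where "r' = r - 1" and "e = k - j - r"
    have "r = Suc r'" and "k = Suc (j + r' + e)"
      using \<open>j \<in> {..<k}\<close> \<open>r \<in> {1..k - j}\<close> by (auto simp: r'_def e_def)
    then have "(-1 :: 'a)^(n - (w + j + r)) * (-1)^(r - 1) = (-1)^(k - 1) * (-1)^j"
      by (simp add: n power_add algebra_simps)
    then show "h (w + j) * F (w + j) (w + j + r)
      = (-1)^(k - 1) * ((-1)^j * h (w + j) * (G (w + j) (w + j + r) * D (w + j + r)))"
      by (simp add: F_def algebra_simps)
  qed
  finally show ?thesis by (simp only: w_def)
qed

lemma E_det_eq_hess_minor:
  assumes "r \<in> {1..k - j}" and "k \<le> n"
  shows "E_det P k n (j + r - 1) = hess_minor P n (n - k + j + r)"
proof -
  define t where "t = j + r - 1"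
  have "t < k" and index: "n - k + j + r = n - k + t + 1"
    using assms by (auto simp: t_def)
  have "E_det P k n t = hess_minor P n (n - k + t + 1)"
  proof (cases "t = k - 1")
    case True
    then show ?thesis using \<open>t < k\<close> \<open>k \<le> n\<close> by (simp add: E_det_def)
  next
    case False
    have size: "n - (n - k + t + 1) = k - t - 1" using \<open>t < k\<close> \<open>k \<le> n\<close> by simp
    show ?thesis
      unfolding E_det_def hess_minor_def if_not_P[OF False] size
      by (intro arg_cong[where f = det] eq_matI) (auto simp: ac_simps)
  qed
  then show ?thesis by (simp only: index t_def)
qed

theorem theorem3:
  fixes N Nt :: nat
    and a a1 :: "nat \<Rightarrow> complex poly"
    and lam \<gamma> :: "nat \<Rightarrow> complex"
    and P P1 :: "nat \<Rightarrow> complex poly"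
  assumes N_ge: "N \<ge> 1"
    and a_deg: "\<And>i. degree (a i) \<le> i"
    and a0: "a 0 = 0"
    and a_big: "\<And>i. i > N \<Longrightarrow> a i = 0"
    and lam0: "lam 0 = 0"
    and lam_distinct: "\<And>n. n \<ge> 1 \<Longrightarrow> lam n \<notin> {0} \<union> lam ` {1..<n}"
    and P_deg: "\<And>n. degree (P n) = n"
    and P_monic: "\<And>n. coeff (P n) n = 1"
    and P_eig: "\<And>n. diff_op a 1 N (P n) = smult (lam n) (P n)"
    and \<gamma>_nz: "\<And>n. n \<ge> 1 \<Longrightarrow> \<gamma> n \<noteq> 0"
    and P1_0: "P1 0 = P 0"
    and P1_Suc: "\<And>n. n \<ge> 1 \<Longrightarrow> P1 n = P n + smult (\<gamma> n) (P (n - 1))"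
    and a1_deg: "\<And>i. degree (a1 i) \<le> i"
    and a1_order: "a1 Nt \<noteq> 0"
    and Nt_ge: "Nt \<ge> N"
    and P1_eig: "\<And>n. diff_op a1 0 Nt (P1 n) = smult (lam n) (P1 n)"
  shows "\<And>n k. Nt < k \<Longrightarrow> k \<le> n \<Longrightarrow>
    (\<Sum>j=0..k-1. (-1)^j
        * (\<Sum>s=1..N. of_nat ((n - k + j) choose (s - 1)) * fact s * coeff (a s) s)
        * coeff (P (n - k + j)) (n - k)
        * (\<Sum>r=1..k-j. (\<Prod>i=1..r. \<gamma> (n - k + j + i)) * E_det P k n (j + r - 1))) = 0"
proof -
  fix n k :: nat
  assume "Nt < k" and "k \<le> n"
  have base: "diff_op a1 0 Nt (P 0) = smult (lam 0) (P 0)"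
    using P1_eig[of 0] by (simp add: P1_0)
  have step: "diff_op a1 0 Nt (P (Suc m) + smult (\<gamma> (Suc m)) (P m))
      = smult (lam (Suc m)) (P (Suc m) + smult (\<gamma> (Suc m)) (P m))" for m
    using P1_eig[of "Suc m"] by (simp add: P1_Suc)
  have "(\<Sum>m\<le>n. (-1)^(n - m) * hess_minor P n m
      * coeff (diff_op a1 0 Nt (P m) - smult (lam m) (P m)) (n - k)) = 0"
    by (rule sum_hess_minor_coeff_residual[OF P_deg P_monic P_eig])
      (use \<open>Nt < k\<close> \<open>k \<le> n\<close> Nt_ge in auto)
  then have "(\<Sum>m\<le>n. (-1)^(n - m) * hess_minor P n m * (\<Sum>p<m. (-1)^(m - 1 - p)
      * (\<Prod>i=1..m - p. \<gamma> (p + i)) * ((lam (Suc p) - lam p) * coeff (P p) (n - k)))) = 0"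
    unfolding diff_op_residual_eq_sum[OF base step] by (simp add: coeff_sum mult.assoc)
  then have "(\<Sum>j<k. (-1)^j * ((lam (Suc (n - k + j)) - lam (n - k + j)) * coeff (P (n - k + j)) (n - k))
      * (\<Sum>r=1..k - j. (\<Prod>i=1..r. \<gamma> (n - k + j + i)) * hess_minor P n (n - k + j + r))) = 0"
    using \<open>k \<le> n\<close> by (subst (asm) sum_triangle_reindex) (auto simp: coeff_eq_0 P_deg)
  moreover have "{0..k - 1} = {..<k}"
    using \<open>Nt < k\<close> by auto
  moreover have "(\<Sum>r=1..k - j. (\<Prod>i=1..r. \<gamma> (n - k + j + i)) * E_det P k n (j + r - 1))
      = (\<Sum>r=1..k - j. (\<Prod>i=1..r. \<gamma> (n - k + j + i)) * hess_minor P n (n - k + j + r))" for j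
    using \<open>k \<le> n\<close> by (intro sum.cong refl arg_cong2[where f = "(*)"] E_det_eq_hess_minor)
  ultimately show "?thesis n k"
    by (simp add: eigenvalue_Suc_diff[OF a_deg P_deg P_monic P_eig] mult.assoc cong: sum.cong)
qed

end
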